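(* Let $A,B,C,D,E\in\mathbb{C}$ with $E\neq0$ and $M=\{(x,y,z)\in\mathbb{C}^3 : x^2+y^2+z^2+Exyz-Ax-By-Cz-D=0\}$. The vector fields \begin{align*} V^x&=(2z+Exy-C)\tfrac{\partial}{\partial y}-(2y+Exz-B)\tfrac{\partial}{\partial z},\\ V^y&=-(2z+Exy-C)\tfrac{\partial}{\partial x}+(2x+Eyz-A)\tfrac{\partial}{\partial z},\\ V^z&=(2y+Exz-B)\tfrac{\partial}{\partial x}-(2x+Eyz-A)\tfrac{\partial}{\partial y} \end{align*} are tangent to $M$, and each of them is complete on $M$ (its flow exists for all complex times). *)

theory Defs
  imports "HOL-Analysis.Analysis"
begin

type_synonym c3 = "complex \<times> complex \<times> complex"

definition Fcub :: "complex \<Rightarrow> complex \<Rightarrow> complex \<Rightarrow> complex \<Rightarrow> complex \<Rightarrow> c3 \<Rightarrow> complex" where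
  "Fcub A B C D E = (\<lambda>(x, y, z). x^2 + y^2 + z^2 + E*x*y*z - A*x - B*y - C*z - D)"

definition Msurf :: "complex \<Rightarrow> complex \<Rightarrow> complex \<Rightarrow> complex \<Rightarrow> complex \<Rightarrow> c3 set" where
  "Msurf A B C D E = {p. Fcub A B C D E p = 0}"

text \<open>Vector fields, given by their component triples (coefficients of d/dx, d/dy, d/dz).\<close>
definition Vx :: "complex \<Rightarrow> complex \<Rightarrow> complex \<Rightarrow> complex \<Rightarrow> c3 \<Rightarrow> c3" where
  "Vx A B C E = (\<lambda>(x, y, z). (0, 2*z + E*x*y - C, -(2*y + E*x*z - B)))"

definition Vy :: "complex \<Rightarrow> complex \<Rightarrow> complex \<Rightarrow> complex \<Rightarrow> c3 \<Rightarrow> c3" where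
  "Vy A B C E = (\<lambda>(x, y, z). (-(2*z + E*x*y - C), 0, 2*x + E*y*z - A))"

definition Vz :: "complex \<Rightarrow> complex \<Rightarrow> complex \<Rightarrow> complex \<Rightarrow> c3 \<Rightarrow> c3" where
  "Vz A B C E = (\<lambda>(x, y, z). (2*y + E*x*z - B, -(2*x + E*y*z - A), 0))"

definition tangent_to :: "(c3 \<Rightarrow> complex) \<Rightarrow> (c3 \<Rightarrow> c3) \<Rightarrow> c3 set \<Rightarrow> bool" where
  "tangent_to F V S \<longleftrightarrow> (\<forall>p\<in>S. \<exists>dF. (F has_derivative dF) (at p) \<and> dF (V p) = 0)"

definition complete_on :: "(c3 \<Rightarrow> c3) \<Rightarrow> c3 set \<Rightarrow> bool" where
  "complete_on V S \<longleftrightarrow>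
     (\<forall>p\<in>S. \<exists>x y z :: complex \<Rightarrow> complex.
        (x 0, y 0, z 0) = p \<and>
        (\<forall>t. (x t, y t, z t) \<in> S \<and>
             (x has_field_derivative fst (V (x t, y t, z t))) (at t) \<and>
             (y has_field_derivative fst (snd (V (x t, y t, z t)))) (at t) \<and>
             (z has_field_derivative snd (snd (V (x t, y t, z t)))) (at t)))"

end

theory Submission
  imports Defs
begin

text \<open>Each field fixes one coordinate: \<open>V\<^sup>x\<close> keeps \<open>x = x\<^sub>0\<close> constant, and on that plane it is
  an affine field in \<open>(y, z)\<close> whose linear part \<open>[[E x\<^sub>0, 2], [-2, -E x\<^sub>0]]\<close> is traceless.
  A traceless \<open>2 \<times> 2\<close> matrix squares to a scalar \<open>w\<close>, so the flow is written explicitly with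
  \<open>cosh (\<surd>w t)\<close> and \<open>sinh (\<surd>w t) / \<surd>w\<close> and exists for all complex times. The derivative of \<open>F\<close>
  annihilates each field identically, which gives tangency and also makes \<open>F\<close> constant along
  these curves, so they stay in \<open>M\<close>.\<close>

lemma scaled_cosh_sinh_exist:
  fixes w :: complex
  shows "\<exists>c s q :: complex \<Rightarrow> complex. c 0 = 1 \<and> s 0 = 0 \<and> q 0 = 0 \<and>
    (\<forall>t. (c has_field_derivative w * s t) (at t) \<and> (s has_field_derivative c t) (at t)
       \<and> (q has_field_derivative s t) (at t) \<and> c t = 1 + w * q t)"
proof (cases "w = 0")
  case True
  show ?thesis
    by (intro exI[of _ "\<lambda>t. 1"] exI[of _ "\<lambda>t. t"] exI[of _ "\<lambda>t. t^2/2"])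
      (auto simp: True intro!: derivative_eq_intros)
next
  case False
  define r where "r = csqrt w"
  have r2: "r * r = w" unfolding r_def by (metis power2_csqrt power2_eq_square)
  with False have "r \<noteq> 0" by auto
  define c where "c = (\<lambda>t. cosh (r * t))"
  define s where "s = (\<lambda>t. sinh (r * t) / r)"
  have dc: "(c has_field_derivative w * s t) (at t)" for t
    unfolding c_def s_def using \<open>r \<noteq> 0\<close>
    by (auto intro!: derivative_eq_intros simp: r2[symmetric])
  have ds: "(s has_field_derivative c t) (at t)" for t
    unfolding c_def s_def using \<open>r \<noteq> 0\<close> by (auto intro!: derivative_eq_intros)
  have dq: "((\<lambda>t. (c t - 1) / w) has_field_derivative s t) (at t)" for t
    using dc[of t] False by (auto intro!: derivative_eq_intros)
  show ?thesis
    using dc ds dq False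
    by (intro exI[of _ c] exI[of _ s] exI[of _ "\<lambda>t. (c t - 1) / w"]) (simp add: c_def s_def)
qed

text \<open>The matrix \<open>M = [[a, b], [c, -a]]\<close> is traceless, so \<open>M\<^sup>2 = w I\<close> with
  \<open>w = a\<^sup>2 + b c\<close>; with forcing \<open>f = (d, e)\<close> the solution with initial value \<open>u = (p, q)\<close> is
  \<open>C(t) u + S(t) (M u + f) + Q(t) M f\<close>.\<close>
lemma traceless_affine_ode_solvable:
  fixes a b c d e p q :: complex
  shows "\<exists>u v :: complex \<Rightarrow> complex. u 0 = p \<and> v 0 = q \<and>
    (\<forall>t. (u has_field_derivative a * u t + b * v t + d) (at t)
       \<and> (v has_field_derivative c * u t - a * v t + e) (at t))"
proof -
  define w where "w = a^2 + b*c"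
  obtain C S Q :: "complex \<Rightarrow> complex" where C0: "C 0 = 1" and S0: "S 0 = 0" and Q0: "Q 0 = 0"
    and dC: "\<And>t. (C has_field_derivative w * S t) (at t)"
    and dS: "\<And>t. (S has_field_derivative C t) (at t)"
    and dQ: "\<And>t. (Q has_field_derivative S t) (at t)"
    and CQ: "\<And>t. C t = 1 + w * Q t"
    using scaled_cosh_sinh_exist[of w] by blast
  define u where "u = (\<lambda>t. C t * p + S t * (a*p + b*q + d) + Q t * (a*d + b*e))"
  define v where "v = (\<lambda>t. C t * q + S t * (c*p - a*q + e) + Q t * (c*d - a*e))"
  have "(u has_field_derivative a * u t + b * v t + d) (at t)" for t
    unfolding u_def
    by (rule derivative_eq_intros dC dS dQ refl)+
      (simp add: u_def v_def CQ w_def algebra_simps power2_eq_square)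
  moreover have "(v has_field_derivative c * u t - a * v t + e) (at t)" for t
    unfolding v_def
    by (rule derivative_eq_intros dC dS dQ refl)+
      (simp add: u_def v_def CQ w_def algebra_simps power2_eq_square)
  moreover have "u 0 = p" "v 0 = q"
    by (simp_all add: u_def v_def C0 S0 Q0)
  ultimately show ?thesis by blast
qed

definition Fcub_diff :: "complex \<Rightarrow> complex \<Rightarrow> complex \<Rightarrow> complex \<Rightarrow> c3 \<Rightarrow> c3 \<Rightarrow> complex" where
  "Fcub_diff A B C E = (\<lambda>(x, y, z) (u, v, w).
     (2*x + E*y*z - A) * u + (2*y + E*x*z - B) * v + (2*z + E*x*y - C) * w)"

lemma Fcub_has_derivative: "(Fcub A B C D E has_derivative Fcub_diff A B C E p) (at p)"
proof -
  obtain x y z where p: "p = (x, y, z)" by (cases p) auto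
  have F: "Fcub A B C D E = (\<lambda>v. fst v ^ 2 + fst (snd v) ^ 2 + snd (snd v) ^ 2
      + E * fst v * fst (snd v) * snd (snd v) - A * fst v - B * fst (snd v) - C * snd (snd v) - D)"
    by (auto simp: Fcub_def)
  show ?thesis
    unfolding F p
    by (rule has_derivative_eq_rhs, (rule derivative_eq_intros | simp)+)
      (auto simp: Fcub_diff_def algebra_simps power2_eq_square)
qed

lemma tangent_to_FcubI:
  assumes "\<And>p. Fcub_diff A B C E p (V p) = 0"
  shows "tangent_to (Fcub A B C D E) V S"
  using Fcub_has_derivative assms unfolding tangent_to_def by blast

definition integral_curve ::
    "(c3 \<Rightarrow> c3) \<Rightarrow> (complex \<Rightarrow> complex) \<Rightarrow> (complex \<Rightarrow> complex) \<Rightarrow> (complex \<Rightarrow> complex) \<Rightarrow> bool" where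
  "integral_curve V x y z \<longleftrightarrow>
     (\<forall>t. (x has_field_derivative fst (V (x t, y t, z t))) (at t) \<and>
          (y has_field_derivative fst (snd (V (x t, y t, z t)))) (at t) \<and>
          (z has_field_derivative snd (snd (V (x t, y t, z t)))) (at t))"

lemma Fcub_const_on_integral_curve:
  assumes curve: "integral_curve V x y z" and tangent: "\<And>p. Fcub_diff A B C E p (V p) = 0"
  shows "Fcub A B C D E (x t, y t, z t) = Fcub A B C D E (x 0, y 0, z 0)"
proof -
  have "((\<lambda>t. Fcub A B C D E (x t, y t, z t)) has_derivative (\<lambda>h. 0)) (at t)" for t
  proof -
    let ?v = "V (x t, y t, z t)"
    have "((\<lambda>t. (x t, y t, z t)) has_derivative
        (\<lambda>h. (fst ?v * h, fst (snd ?v) * h, snd (snd ?v) * h))) (at t)"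
      using curve unfolding integral_curve_def has_field_derivative_def
      by (intro has_derivative_Pair) auto
    then have "((\<lambda>t. Fcub A B C D E (x t, y t, z t)) has_derivative
        (\<lambda>h. Fcub_diff A B C E (x t, y t, z t) (fst ?v * h, fst (snd ?v) * h, snd (snd ?v) * h))) (at t)"
      by (rule has_derivative_compose[OF _ Fcub_has_derivative])
    moreover have "Fcub_diff A B C E (x t, y t, z t) (fst ?v * h, fst (snd ?v) * h, snd (snd ?v) * h)
        = h * Fcub_diff A B C E (x t, y t, z t) ?v" for h
      by (simp add: Fcub_diff_def case_prod_beta algebra_simps)
    ultimately show ?thesis
      using tangent by simp
  qed
  then show ?thesis
    using has_derivative_zero_constant[of UNIV "\<lambda>t. Fcub A B C D E (x t, y t, z t)"] by auto
qed

lemma complete_on_iff_integral_curve: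
  "complete_on V S \<longleftrightarrow>
     (\<forall>p\<in>S. \<exists>x y z. (x 0, y 0, z 0) = p \<and> (\<forall>t. (x t, y t, z t) \<in> S) \<and> integral_curve V x y z)"
  unfolding complete_on_def integral_curve_def by blast

lemma complete_on_MsurfI:
  assumes tangent: "\<And>p. Fcub_diff A B C E p (V p) = 0"
    and curves: "\<And>p. \<exists>x y z. (x 0, y 0, z 0) = p \<and> integral_curve V x y z"
  shows "complete_on V (Msurf A B C D E)"
  unfolding complete_on_iff_integral_curve
proof
  fix p assume "p \<in> Msurf A B C D E"
  obtain x y z where start: "(x 0, y 0, z 0) = p" and curve: "integral_curve V x y z"
    using curves by blast
  have "(x t, y t, z t) \<in> Msurf A B C D E" for t
    using Fcub_const_on_integral_curve[OF curve tangent] start \<open>p \<in> Msurf A B C D E\<close>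
    by (simp add: Msurf_def)
  with start curve show "\<exists>x y z. (x 0, y 0, z 0) = p \<and> (\<forall>t. (x t, y t, z t) \<in> Msurf A B C D E)
      \<and> integral_curve V x y z"
    by blast
qed

lemma Fcub_diff_Vx: "Fcub_diff A B C E p (Vx A B C E p) = 0"
  by (simp add: Fcub_diff_def Vx_def case_prod_beta algebra_simps)

lemma Fcub_diff_Vy: "Fcub_diff A B C E p (Vy A B C E p) = 0"
  by (simp add: Fcub_diff_def Vy_def case_prod_beta algebra_simps)

lemma Fcub_diff_Vz: "Fcub_diff A B C E p (Vz A B C E p) = 0"
  by (simp add: Fcub_diff_def Vz_def case_prod_beta algebra_simps)

lemma Vx_integral_curve_exists: "\<exists>x y z. (x 0, y 0, z 0) = p \<and> integral_curve (Vx A B C E) x y z"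
proof -
  obtain x0 y0 z0 where p: "p = (x0, y0, z0)" by (cases p) auto
  obtain y z where "y 0 = y0" "z 0 = z0"
    and "\<And>t. (y has_field_derivative (E*x0) * y t + 2 * z t + -C) (at t)
       \<and> (z has_field_derivative (-2) * y t - (E*x0) * z t + B) (at t)"
    using traceless_affine_ode_solvable[where a = "E*x0" and b = 2 and d = "-C" and c = "-2" and e = "B"
        and p = y0 and q = z0] by blast
  then show ?thesis
    unfolding p integral_curve_def
    by (intro exI[of _ "\<lambda>_. x0"] exI[of _ y] exI[of _ z]) (auto simp: Vx_def algebra_simps)
qed

lemma Vy_integral_curve_exists: "\<exists>x y z. (x 0, y 0, z 0) = p \<and> integral_curve (Vy A B C E) x y z"
proof -
  obtain x0 y0 z0 where p: "p = (x0, y0, z0)" by (cases p) auto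
  obtain x z where "x 0 = x0" "z 0 = z0"
    and "\<And>t. (x has_field_derivative (-(E*y0)) * x t + (-2) * z t + C) (at t)
       \<and> (z has_field_derivative 2 * x t - (-(E*y0)) * z t + -A) (at t)"
    using traceless_affine_ode_solvable[where a = "-(E*y0)" and b = "-2" and d = "C" and c = "2" and e = "-A"
        and p = x0 and q = z0] by blast
  then show ?thesis
    unfolding p integral_curve_def
    by (intro exI[of _ x] exI[of _ "\<lambda>_. y0"] exI[of _ z]) (auto simp: Vy_def algebra_simps)
qed

lemma Vz_integral_curve_exists: "\<exists>x y z. (x 0, y 0, z 0) = p \<and> integral_curve (Vz A B C E) x y z"
proof -
  obtain x0 y0 z0 where p: "p = (x0, y0, z0)" by (cases p) auto
  obtain x y where "x 0 = x0" "y 0 = y0"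
    and "\<And>t. (x has_field_derivative (E*z0) * x t + 2 * y t + -B) (at t)
       \<and> (y has_field_derivative (-2) * x t - (E*z0) * y t + A) (at t)"
    using traceless_affine_ode_solvable[where a = "E*z0" and b = 2 and d = "-B" and c = "-2" and e = "A"
        and p = x0 and q = y0] by blast
  then show ?thesis
    unfolding p integral_curve_def
    by (intro exI[of _ x] exI[of _ y] exI[of _ "\<lambda>_. z0"]) (auto simp: Vz_def algebra_simps)
qed

theorem lemma2p1:
  fixes A B C D E :: complex
  assumes "E \<noteq> 0"
  shows "tangent_to (Fcub A B C D E) (Vx A B C E) (Msurf A B C D E)
       \<and> tangent_to (Fcub A B C D E) (Vy A B C E) (Msurf A B C D E)
       \<and> tangent_to (Fcub A B C D E) (Vz A B C E) (Msurf A B C D E)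
       \<and> complete_on (Vx A B C E) (Msurf A B C D E)
       \<and> complete_on (Vy A B C E) (Msurf A B C D E)
       \<and> complete_on (Vz A B C E) (Msurf A B C D E)"
  by (intro conjI tangent_to_FcubI complete_on_MsurfI Fcub_diff_Vx Fcub_diff_Vy Fcub_diff_Vz
      Vx_integral_curve_exists Vy_integral_curve_exists Vz_integral_curve_exists)

end
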